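(* Let $R$ be a ring. (1) If $R$ is $\Gamma$-graded and quasi-Baer, then $R$ is graded quasi-Baer. (2) If $R$ is $\Gamma$-graded, graded quasi-Baer, and the (left and right) annihilators of its two-sided ideals are graded ideals, then $R$ is quasi-Baer.
   Context: Rings are associative, not necessarily unital. $R$ is $\Gamma$-graded ($\Gamma$ a group) if $R=\bigoplus_{\gamma\in\Gamma}R_\gamma$ with $R_\gamma R_\delta\subseteq R_{\gamma\delta}$; homogeneous elements are those of $\bigcup_\gamma R_\gamma$; a (one- or two-sided) ideal $I$ is graded if $I=\bigoplus_\gamma(I\cap R_\gamma)$. $\operatorname{ann}_r(X)=\{r\mid Xr=0\}$, $\operatorname{ann}_l(X)=\{r\mid rX=0\}$. $R$ is quasi-Baer if for every right ideal $I$ there is an idempotent $\varepsilon\in R$ with $\operatorname{ann}_r(I)=\varepsilon R$ (this is left-right symmetric, and equivalent to requiring it for two-sided ideals $I$; it forces $R$ to be unital). $R$ is graded quasi-Baer if for every graded right ideal $I$ there is a homogeneous idempotent $\varepsilon\in R$ with $\operatorname{ann}_r(I)=\varepsilon R$ (likewise left-right symmetric and equivalent to the version with graded two-sided ideals). *)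

theory Defs
  imports Main
begin

text \<open>Rings: type class ring (associative, not necessarily unital).
  Grading group: type class group_add (not necessarily commutative),
  written additively.\<close>

definition graded_ring :: "('g::group_add \<Rightarrow> 'a::ring set) \<Rightarrow> bool" where
  "graded_ring Rg \<longleftrightarrow>
     (\<forall>g. 0 \<in> Rg g \<and> (\<forall>x\<in>Rg g. \<forall>y\<in>Rg g. x + y \<in> Rg g) \<and> (\<forall>x\<in>Rg g. - x \<in> Rg g)) \<and>
     (\<forall>g h. \<forall>x\<in>Rg g. \<forall>y\<in>Rg h. x * y \<in> Rg (g + h)) \<and>
     (\<forall>r. \<exists>!c. finite {g. c g \<noteq> 0} \<and> (\<forall>g. c g \<in> Rg g) \<and> r = (\<Sum>g\<in>{g. c g \<noteq> 0}. c g))"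

definition homogeneous :: "('g \<Rightarrow> 'a set) \<Rightarrow> 'a \<Rightarrow> bool" where
  "homogeneous Rg x \<longleftrightarrow> (\<exists>g. x \<in> Rg g)"

definition additive_subgroup :: "'a::ring set \<Rightarrow> bool" where
  "additive_subgroup I \<longleftrightarrow> 0 \<in> I \<and> (\<forall>x\<in>I. \<forall>y\<in>I. x + y \<in> I) \<and> (\<forall>x\<in>I. - x \<in> I)"

definition right_ideal :: "'a::ring set \<Rightarrow> bool" where
  "right_ideal I \<longleftrightarrow> additive_subgroup I \<and> (\<forall>x\<in>I. \<forall>r. x * r \<in> I)"

definition left_ideal :: "'a::ring set \<Rightarrow> bool" where
  "left_ideal I \<longleftrightarrow> additive_subgroup I \<and> (\<forall>x\<in>I. \<forall>r. r * x \<in> I)"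

definition two_sided_ideal :: "'a::ring set \<Rightarrow> bool" where
  "two_sided_ideal I \<longleftrightarrow> left_ideal I \<and> right_ideal I"

definition graded_set :: "('g::group_add \<Rightarrow> 'a::ring set) \<Rightarrow> 'a set \<Rightarrow> bool" where
  "graded_set Rg I \<longleftrightarrow>
     (\<forall>x\<in>I. \<exists>c. finite {g. c g \<noteq> 0} \<and> (\<forall>g. c g \<in> I \<inter> Rg g) \<and> x = (\<Sum>g\<in>{g. c g \<noteq> 0}. c g))"

definition ann_r :: "'a::ring set \<Rightarrow> 'a set" where
  "ann_r X = {r. \<forall>x\<in>X. x * r = 0}"

definition ann_l :: "'a::ring set \<Rightarrow> 'a set" where
  "ann_l X = {r. \<forall>x\<in>X. r * x = 0}"

definition quasi_Baer :: "'a::ring itself \<Rightarrow> bool" where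
  "quasi_Baer _ \<longleftrightarrow>
     (\<forall>I::'a set. right_ideal I \<longrightarrow> (\<exists>e. e * e = e \<and> ann_r I = range (\<lambda>r. e * r)))"

definition graded_quasi_Baer :: "('g::group_add \<Rightarrow> 'a::ring set) \<Rightarrow> bool" where
  "graded_quasi_Baer Rg \<longleftrightarrow>
     (\<forall>I. right_ideal I \<and> graded_set Rg I \<longrightarrow>
        (\<exists>e. homogeneous Rg e \<and> e * e = e \<and> ann_r I = range (\<lambda>r. e * r)))"

end

theory Submission
  imports Defs
begin

text \<open>
  (1) Let \<open>ann_r I = eR\<close> with \<open>e\<close> idempotent and \<open>I\<close> graded. The annihilator of a graded set
  contains the homogeneous components of its elements, so every component \<open>e\<^sub>g\<close> lies in \<open>eR\<close>
  and hence \<open>e e\<^sub>g = e\<^sub>g\<close>. Comparing degree-\<open>g\<close> components gives \<open>e\<^sub>0 e\<^sub>g = e\<^sub>g\<close>, so \<open>e\<^sub>0 e = e\<close>;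
  together with \<open>e e\<^sub>0 = e\<^sub>0\<close> this makes \<open>e\<^sub>0\<close> a homogeneous idempotent with \<open>e\<^sub>0R = eR\<close>.

  (2) For a right ideal \<open>I\<close>, \<open>ann_r I = ann_r (ann_l (ann_r I))\<close>, and \<open>ann_l (ann_r I)\<close> is a
  graded right ideal by hypothesis, to which graded quasi-Baerness applies.
\<close>

definition homogeneous_decomposition :: "('g::group_add \<Rightarrow> 'a::ring set) \<Rightarrow> ('g \<Rightarrow> 'a) \<Rightarrow> 'a \<Rightarrow> bool" where
  "homogeneous_decomposition Rg c r \<longleftrightarrow>
     finite {g. c g \<noteq> 0} \<and> (\<forall>g. c g \<in> Rg g) \<and> r = (\<Sum>g\<in>{g. c g \<noteq> 0}. c g)"

definition homogeneous_component :: "('g::group_add \<Rightarrow> 'a::ring set) \<Rightarrow> 'g \<Rightarrow> 'a \<Rightarrow> 'a" where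
  "homogeneous_component Rg g r = (THE c. homogeneous_decomposition Rg c r) g"

lemma same_principal_right_ideal:
  fixes e f :: "'a::semigroup_mult"
  assumes "e * f = f" and "f * e = e"
  shows "f * f = f" and "range (\<lambda>r. f * r) = range (\<lambda>r. e * r)"
proof -
  show "f * f = f"
    by (metis assms mult.assoc)
  have "f * r = e * (f * r)" "e * r = f * (e * r)" for r
    by (simp_all add: assms mult.assoc[symmetric])
  then show "range (\<lambda>r. f * r) = range (\<lambda>r. e * r)"
    by blast
qed

lemma ann_r_two_sided_ideal:
  fixes I :: "'a::ring set"
  assumes "right_ideal I"
  shows "two_sided_ideal (ann_r I)"
  using assms
  unfolding two_sided_ideal_def left_ideal_def right_ideal_def additive_subgroup_def ann_r_def
  by (auto simp: distrib_left mult.assoc[symmetric])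

lemma ann_r_ann_l_ann_r [simp]: "ann_r (ann_l (ann_r X)) = ann_r X"
  unfolding ann_r_def ann_l_def by blast

context
  fixes Rg :: "'g::group_add \<Rightarrow> 'a::ring set"
  assumes graded: "graded_ring Rg"
begin

lemma graded_ring_mult: "x \<in> Rg g \<Longrightarrow> y \<in> Rg h \<Longrightarrow> x * y \<in> Rg (g + h)"
  using graded unfolding graded_ring_def by (elim conjE) blast

lemma graded_ring_zero: "0 \<in> Rg g"
  using graded unfolding graded_ring_def by (elim conjE) blast

lemma ex1_homogeneous_decomposition: "\<exists>!c. homogeneous_decomposition Rg c r"
  using graded unfolding graded_ring_def homogeneous_decomposition_def by (elim conjE) (rule spec)

lemma homogeneous_decomposition_component:
  "homogeneous_decomposition Rg (\<lambda>g. homogeneous_component Rg g r) r"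
  unfolding homogeneous_component_def using ex1_homogeneous_decomposition by (rule theI')

lemma homogeneous_component_in: "homogeneous_component Rg g r \<in> Rg g"
  using homogeneous_decomposition_component unfolding homogeneous_decomposition_def by blast

lemma sum_homogeneous_components:
  "finite {g. homogeneous_component Rg g r \<noteq> 0}"
  "r = (\<Sum>g\<in>{g. homogeneous_component Rg g r \<noteq> 0}. homogeneous_component Rg g r)"
  using homogeneous_decomposition_component unfolding homogeneous_decomposition_def by blast+

lemma homogeneous_component_eqI:
  assumes "finite S" and "\<And>g. c g \<in> Rg g" and "\<And>g. g \<notin> S \<Longrightarrow> c g = 0" and "r = sum c S"
  shows "homogeneous_component Rg g r = c g"
proof -
  have support: "{g. c g \<noteq> 0} \<subseteq> S"
    using assms(3) by blast
  have "sum c S = (\<Sum>g\<in>{g. c g \<noteq> 0}. c g)"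
    by (rule sum.mono_neutral_right) (use assms(1,3) in auto)
  then have "homogeneous_decomposition Rg c r"
    using assms finite_subset[OF support] unfolding homogeneous_decomposition_def by simp
  then have "(THE c. homogeneous_decomposition Rg c r) = c"
    using ex1_homogeneous_decomposition by (intro the1_equality)
  then show ?thesis
    unfolding homogeneous_component_def by simp
qed

lemma homogeneous_component_of_homogeneous:
  assumes "x \<in> Rg h"
  shows "homogeneous_component Rg g x = (if g = h then x else 0)"
  by (rule homogeneous_component_eqI[of "{h}"]) (use assms graded_ring_zero in auto)

lemma homogeneous_component_0 [simp]: "homogeneous_component Rg g 0 = 0"
  using homogeneous_component_of_homogeneous[OF graded_ring_zero] by simp

lemma homogeneous_component_mult_left:
  assumes x: "x \<in> Rg h"
  shows "homogeneous_component Rg (h + g) (x * r) = x * homogeneous_component Rg g r"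
proof -
  let ?c = "\<lambda>g. homogeneous_component Rg g r"
  define S where "S = {g. ?c g \<noteq> 0}"
  have "finite S" and r: "sum ?c S = r"
    using sum_homogeneous_components unfolding S_def by metis+
  have "(\<Sum>k\<in>(+) h ` S. x * ?c (- h + k)) = x * sum ?c S"
    by (simp add: sum_distrib_left sum.reindex inj_on_def)
  then have "x * r = (\<Sum>k\<in>(+) h ` S. x * ?c (- h + k))"
    by (simp only: r)
  moreover have "x * ?c (- h + k) \<in> Rg k" for k
    using graded_ring_mult[OF x homogeneous_component_in, of "- h + k"] by (simp add: add.assoc[symmetric])
  moreover have "x * ?c (- h + k) = 0" if "k \<notin> (+) h ` S" for k
  proof -
    have "- h + k \<notin> S"
      using that by (metis add_minus_cancel image_eqI)
    then show ?thesis
      unfolding S_def by simp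
  qed
  ultimately have "homogeneous_component Rg k (x * r) = x * ?c (- h + k)" for k
    using \<open>finite S\<close> by (intro homogeneous_component_eqI) auto
  from this[of "h + g"] show ?thesis
    by (simp add: add.assoc[symmetric])
qed

lemma homogeneous_component_mult_right:
  assumes x: "x \<in> Rg h"
  shows "homogeneous_component Rg (g + h) (r * x) = homogeneous_component Rg g r * x"
proof -
  let ?c = "\<lambda>g. homogeneous_component Rg g r"
  define S where "S = {g. ?c g \<noteq> 0}"
  have "finite S" and r: "sum ?c S = r"
    using sum_homogeneous_components unfolding S_def by metis+
  have "(\<Sum>k\<in>(\<lambda>g. g + h) ` S. ?c (k - h) * x) = sum ?c S * x"
    by (simp add: sum_distrib_right sum.reindex inj_on_def)
  then have "r * x = (\<Sum>k\<in>(\<lambda>g. g + h) ` S. ?c (k - h) * x)"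
    by (simp only: r)
  moreover have "?c (k - h) * x \<in> Rg k" for k
    using graded_ring_mult[OF homogeneous_component_in x, of "k - h"] by simp
  moreover have "?c (k - h) * x = 0" if "k \<notin> (\<lambda>g. g + h) ` S" for k
  proof -
    have "k - h \<notin> S"
      using that by (metis diff_add_cancel image_eqI)
    then show ?thesis
      unfolding S_def by simp
  qed
  ultimately have "homogeneous_component Rg k (r * x) = ?c (k - h) * x" for k
    using \<open>finite S\<close> by (intro homogeneous_component_eqI) auto
  from this[of "g + h"] show ?thesis
    by simp
qed

lemma ann_r_homogeneous_component:
  assumes I: "graded_set Rg I" and r: "r \<in> ann_r I"
  shows "homogeneous_component Rg g r \<in> ann_r I"
  unfolding ann_r_def
proof (intro CollectI ballI)
  fix x assume "x \<in> I"
  then obtain d where d: "\<And>k. d k \<in> I \<inter> Rg k" and x: "x = (\<Sum>k\<in>{k. d k \<noteq> 0}. d k)"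
    using I unfolding graded_set_def by blast
  have "d k * homogeneous_component Rg g r = 0" for k
  proof -
    have "d k * r = 0"
      using r d unfolding ann_r_def by blast
    then show ?thesis
      using homogeneous_component_mult_left[of "d k" k g r] d by simp
  qed
  then show "x * homogeneous_component Rg g r = 0"
    by (simp add: x sum_distrib_right)
qed

lemma graded_quasi_Baer_if_quasi_Baer:
  assumes "quasi_Baer TYPE('a)"
  shows "graded_quasi_Baer Rg"
  unfolding graded_quasi_Baer_def
proof (intro allI impI, elim conjE)
  fix I :: "'a set"
  assume "right_ideal I" and "graded_set Rg I"
  then obtain e where "e * e = e" and ann: "ann_r I = range (\<lambda>r. e * r)"
    using assms unfolding quasi_Baer_def by blast
  let ?c = "\<lambda>g. homogeneous_component Rg g e"
  have absorb: "e * ?c g = ?c g" for g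
  proof -
    have "e \<in> ann_r I"
      using ann \<open>e * e = e\<close> by (metis rangeI)
    then have "?c g \<in> ann_r I"
      using ann_r_homogeneous_component \<open>graded_set Rg I\<close> by blast
    then obtain s where "?c g = e * s"
      using ann by blast
    then show ?thesis
      by (simp add: mult.assoc[symmetric] \<open>e * e = e\<close>)
  qed
  have "?c 0 * ?c g = ?c g" for g
  proof -
    have "?c 0 * ?c g = homogeneous_component Rg (0 + g) (e * ?c g)"
      by (rule homogeneous_component_mult_right[OF homogeneous_component_in, symmetric])
    also have "\<dots> = ?c g"
      by (simp add: absorb homogeneous_component_of_homogeneous[OF homogeneous_component_in])
    finally show ?thesis .
  qed
  then have "?c 0 * e = e"
    by (subst (1 3) sum_homogeneous_components(2)[of e]) (simp add: sum_distrib_left)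
  with absorb[of 0] have "?c 0 * ?c 0 = ?c 0" "range (\<lambda>r. ?c 0 * r) = range (\<lambda>r. e * r)"
    by (rule same_principal_right_ideal)+
  moreover have "homogeneous Rg (?c 0)"
    using homogeneous_component_in unfolding homogeneous_def by blast
  ultimately show "\<exists>e. homogeneous Rg e \<and> e * e = e \<and> ann_r I = range (\<lambda>r. e * r)"
    using ann by metis
qed

end

lemma quasi_Baer_if_graded_quasi_Baer:
  fixes Rg :: "'g::group_add \<Rightarrow> 'a::ring set"
  assumes "graded_quasi_Baer Rg"
    and "\<And>I. two_sided_ideal I \<Longrightarrow> right_ideal (ann_l I) \<and> graded_set Rg (ann_l I)"
  shows "quasi_Baer TYPE('a)"
  unfolding quasi_Baer_def
proof (intro allI impI)
  fix I :: "'a set"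
  assume "right_ideal I"
  then have "right_ideal (ann_l (ann_r I)) \<and> graded_set Rg (ann_l (ann_r I))"
    using assms(2) ann_r_two_sided_ideal by blast
  then show "\<exists>e. e * e = e \<and> ann_r I = range (\<lambda>r. e * r)"
    using assms(1) unfolding graded_quasi_Baer_def by fastforce
qed

theorem proposition4p3:
  fixes Rg :: "'g::group_add \<Rightarrow> 'a::ring set"
  assumes "graded_ring Rg"
  shows "(quasi_Baer TYPE('a) \<longrightarrow> graded_quasi_Baer Rg)
    \<and> (graded_quasi_Baer Rg \<and>
        (\<forall>I. two_sided_ideal I \<longrightarrow>
             two_sided_ideal (ann_l I) \<and> graded_set Rg (ann_l I) \<and>
             two_sided_ideal (ann_r I) \<and> graded_set Rg (ann_r I))
       \<longrightarrow> quasi_Baer TYPE('a))"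
  using graded_quasi_Baer_if_quasi_Baer[OF assms] quasi_Baer_if_graded_quasi_Baer[of Rg]
  unfolding two_sided_ideal_def by blast

end
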